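(* Let $n \ge 2$ and let $(G(k))_{k \in \mathbb{N}}$, $G(k)=(\mathcal{V},\mathcal{E}(k))$, be a sequence of digraphs on $\mathcal{V}=\{1,\dots,n\}$, with knowledge sets $\mathcal{K}_i(k)$ evolving by the flooding update described in the context. Fix a node $q \in \mathcal{V}$. Suppose that for every $k \in \{0,1,\dots,n-2\}$ there exists an input-cord $\mathcal{I}^q(k)$ to node $q$ at time $k$ with $|\mathcal{I}^q(k)| \ge n-k-1$. Then $|\mathcal{K}_q(k+1)| \ge k+2$ for every $k \in \{0,1,\dots,n-2\}$.
   Context: Network: $\mathcal{V}=\{1,\dots,n\}$; each node $i$ holds initial data $d_i \in \mathbb{R}$, with $d_i \neq d_j$ for $i\neq j$. Communication happens at discrete times $k \in \mathbb{N}$ along a time-varying digraph $G(k)=(\mathcal{V},\mathcal{E}(k))$; node $i$ sends to node $j$ at time $k$ iff $(i,j)\in\mathcal{E}(k)$. Knowledge sets: $\mathcal{K}_i(0)=\{d_i\}$, and (flooding update) each node's knowledge at time $k+1$ is its knowledge at time $k$ together with the full knowledge at time $k$ of every node sending to it: $\mathcal{K}_j(k+1)=\mathcal{K}_j(k)\cup\bigcup_{i:(i,j)\in\mathcal{E}(k)}\mathcal{K}_i(k)$. Input-cord: for a node $i$ and time $k$, an input-cord to $i$ is an ordered list $\mathcal{I}^i(k)=(\mathcal{I}^i_1(k),\dots,\mathcal{I}^i_m(k))$ of pairwise distinct nodes of $\mathcal{V}\setminus\{i\}$ such that $(\mathcal{I}^i_j(k),\mathcal{I}^i_{j+1}(k))\in\mathcal{E}(k)$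 for all $j\in\{1,\dots,m-1\}$ and $(\mathcal{I}^i_m(k),i)\in\mathcal{E}(k)$; its cardinality is $|\mathcal{I}^i(k)|=m$. *)

theory Defs
  imports Main "HOL.Real"
begin

text \<open>Nodes are the naturals 1..n; E k is the edge set of the digraph G(k);
  d i is the initial datum of node i.  Knowledge sets under flooding.\<close>

primrec knowledge :: "(nat \<Rightarrow> (nat \<times> nat) set) \<Rightarrow> (nat \<Rightarrow> real) \<Rightarrow> nat \<Rightarrow> nat \<Rightarrow> real set" where
  "knowledge E d j 0 = {d j}"
| "knowledge E d j (Suc k) =
     knowledge E d j k \<union> (\<Union>i\<in>{i. (i, j) \<in> E k}. knowledge E d i k)"

definition input_cord ::
  "nat set \<Rightarrow> (nat \<Rightarrow> (nat \<times> nat) set) \<Rightarrow> nat \<Rightarrow> nat \<Rightarrow> nat list \<Rightarrow> bool" where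
  "input_cord V E i k cs \<longleftrightarrow>
     cs \<noteq> [] \<and> distinct cs \<and> set cs \<subseteq> V - {i} \<and>
     (\<forall>j. Suc j < length cs \<longrightarrow> (cs ! j, cs ! Suc j) \<in> E k) \<and>
     (last cs, i) \<in> E k"

end

theory Submission
  imports Defs
begin

text \<open>Pool the knowledge of a set S of nodes. One flooding step pools over S together with its
  in-neighbours. If S contains q and adds no in-neighbour, S contains every input-cord to q. An
  input-cord at time k has at least n - k - 1 nodes, so S then has at least n - k nodes.
  Otherwise S grows by at least one node. By induction on k, the pooled knowledge of any
  S \<ni> q at time k has at least min n (k + |S|) elements. S = {q} gives the theorem.\<close>

definition pooled_knowledge ::
  "(nat \<Rightarrow> (nat \<times> nat) set) \<Rightarrow> (nat \<Rightarrow> real) \<Rightarrow> nat set \<Rightarrow> nat \<Rightarrow> real set" where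
  "pooled_knowledge E d S k = (\<Union>j\<in>S. knowledge E d j k)"

definition in_closure :: "(nat \<times> nat) set \<Rightarrow> nat set \<Rightarrow> nat set" where
  "in_closure F S = S \<union> {i. \<exists>j\<in>S. (i, j) \<in> F}"

lemma pooled_knowledge_0: "pooled_knowledge E d S 0 = d ` S"
  by (auto simp: pooled_knowledge_def)

lemma pooled_knowledge_Suc:
  "pooled_knowledge E d S (Suc k) = pooled_knowledge E d (in_closure (E k) S) k"
  by (auto simp: pooled_knowledge_def in_closure_def)

lemma in_closure_subset:
  assumes "F \<subseteq> V \<times> V" and "S \<subseteq> V"
  shows "in_closure F S \<subseteq> V"
  using assms by (auto simp: in_closure_def)

lemma input_cord_subset_closed:
  assumes cord: "input_cord V E q k cs" and "q \<in> S" and closed: "in_closure (E k) S = S"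
  shows "set cs \<subseteq> S"
proof -
  have pred_in_S: "i \<in> S" if "(i, j) \<in> E k" "j \<in> S" for i j
    using that closed by (auto simp: in_closure_def)
  have ne: "cs \<noteq> []" using cord by (simp add: input_cord_def)
  have "cs ! i \<in> S" if "i \<le> length cs - 1" for i
    using that
  proof (induction rule: inc_induct)
    case base
    have "(last cs, q) \<in> E k" using cord by (simp add: input_cord_def)
    then show ?case using pred_in_S \<open>q \<in> S\<close> ne by (simp add: last_conv_nth)
  next
    case (step i)
    then have "(cs ! i, cs ! Suc i) \<in> E k" using cord by (simp add: input_cord_def)
    then show ?case using step.IH by (rule pred_in_S)
  qed
  then show ?thesis by (auto simp: in_set_conv_nth)
qed

lemma card_ge_input_cord:
  assumes "input_cord V E q k cs" and "q \<in> S" and "finite S" and "in_closure (E k) S = S"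
  shows "length cs + 1 \<le> card S"
proof -
  have "q \<notin> set cs" and "distinct cs" using assms(1) by (auto simp: input_cord_def)
  then have "card (insert q (set cs)) = length cs + 1" by (simp add: distinct_card)
  moreover have "insert q (set cs) \<subseteq> S"
    using input_cord_subset_closed[OF assms(1,2,4)] assms(2) by blast
  ultimately show ?thesis using assms(3) card_mono by metis
qed

lemma card_pooled_knowledge_ge:
  assumes "finite V" and edges: "\<And>k. E k \<subseteq> V \<times> V" and "inj_on d V"
    and cords: "\<And>k. k < K \<Longrightarrow> \<exists>cs. input_cord V E q k cs \<and> card V - k - 1 \<le> length cs"
    and "q \<in> S" and "S \<subseteq> V"
  shows "min (card V) (K + card S) \<le> card (pooled_knowledge E d S K)"
  using cords \<open>q \<in> S\<close> \<open>S \<subseteq> V\<close>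
proof (induction K arbitrary: S)
  case 0
  then have "inj_on d S" using \<open>inj_on d V\<close> inj_on_subset by blast
  then show ?case by (simp add: pooled_knowledge_0 card_image)
next
  case (Suc K)
  let ?T = "in_closure (E K) S"
  have "?T \<subseteq> V" using in_closure_subset[OF edges \<open>S \<subseteq> V\<close>] .
  moreover have "q \<in> ?T" using \<open>q \<in> S\<close> by (simp add: in_closure_def)
  ultimately have IH: "min (card V) (K + card ?T) \<le> card (pooled_knowledge E d S (Suc K))"
    using Suc by (simp add: pooled_knowledge_Suc)
  have "finite ?T" using \<open>?T \<subseteq> V\<close> \<open>finite V\<close> finite_subset by blast
  have "S \<subseteq> ?T" by (auto simp: in_closure_def)
  show ?case
  proof (cases "?T = S")
    case False
    then have "card S < card ?T" using \<open>S \<subseteq> ?T\<close> \<open>finite ?T\<close> psubset_card_mono by blast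
    then show ?thesis using IH by linarith
  next
    case True
    obtain cs where "input_cord V E q K cs" and "card V - K - 1 \<le> length cs"
      using Suc.prems(1) by blast
    moreover have "length cs + 1 \<le> card S"
      using card_ge_input_cord[OF \<open>input_cord V E q K cs\<close> \<open>q \<in> S\<close> _ True]
        \<open>finite ?T\<close> True by simp
    ultimately have "card V \<le> K + card S" by linarith
    then show ?thesis using IH True by simp
  qed
qed

theorem lemma1:
  fixes n q :: nat and E :: "nat \<Rightarrow> (nat \<times> nat) set" and d :: "nat \<Rightarrow> real"
  assumes "n \<ge> 2"
    and "\<And>k. E k \<subseteq> {1..n} \<times> {1..n}"
    and "inj_on d {1..n}"
    and "q \<in> {1..n}"
    and "\<And>k. k \<le> n - 2 \<Longrightarrow>
           \<exists>cs. input_cord {1..n} E q k cs \<and> length cs \<ge> n - k - 1"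
  shows "\<forall>k \<le> n - 2. card (knowledge E d q (k + 1)) \<ge> k + 2"
proof (intro allI impI)
  fix k assume "k \<le> n - 2"
  have cords: "\<exists>cs. input_cord {1..n} E q j cs \<and> card {1..n} - j - 1 \<le> length cs"
    if "j < k + 1" for j
    using assms(5)[of j] that \<open>k \<le> n - 2\<close> by simp
  have "min n (k + 2) \<le> card (pooled_knowledge E d {q} (k + 1))"
    using card_pooled_knowledge_ge[OF _ assms(2,3) cords, where S = "{q}"] assms(4) by simp
  then show "card (knowledge E d q (k + 1)) \<ge> k + 2"
    using \<open>k \<le> n - 2\<close> assms(1) by (simp add: pooled_knowledge_def)
qed

end
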